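(* Let $A\in\mathbb{R}^{n\times n}$ be a symmetric irreducible invertible $M$-matrix. Let $u\in\mathbb{R}^n$ be a nonzero vector with $u\le 0$ (entrywise), and set $\alpha=u^TA^{-1}u$. Then the $(n+1)\times(n+1)$ matrix $B=\begin{pmatrix}A & u\\ u^T & \alpha\end{pmatrix}$ is a $P_{\#}$-matrix.
   Context: A $Z$-matrix is a real square matrix with nonpositive off-diagonal entries. An $M$-matrix is a matrix of the form $sI-C$ with $C\ge 0$ entrywise and $s\ge\rho(C)$ (spectral radius); it is invertible iff $s>\rho(C)$. $A$ is reducible if it is permutationally similar to $\begin{pmatrix}B&0\\C&D\end{pmatrix}$ with $B,D$ square (or $n=1$ and $A=0$), irreducible otherwise. A matrix $M$ is a $P_{\#}$-matrix if: $x\in R(M)$ (range of $M$) and $x_i(Mx)_i\le 0$ for all $i$ imply $x=0$. *)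

theory Defs
  imports "Jordan_Normal_Form.Spectral_Radius" "Jordan_Normal_Form.Gauss_Jordan_Elimination"
begin

definition Z_matrix :: "real mat \<Rightarrow> bool" where
  "Z_matrix A \<longleftrightarrow> square_mat A \<and>
     (\<forall>i < dim_row A. \<forall>j < dim_row A. i \<noteq> j \<longrightarrow> A $$ (i, j) \<le> 0)"

definition M_matrix :: "real mat \<Rightarrow> bool" where
  "M_matrix A \<longleftrightarrow> square_mat A \<and>
     (\<exists>s C. C \<in> carrier_mat (dim_row A) (dim_row A) \<and>
        (\<forall>i < dim_row A. \<forall>j < dim_row A. C $$ (i, j) \<ge> 0) \<and>
        A = s \<cdot>\<^sub>m 1\<^sub>m (dim_row A) - C \<and>
        s \<ge> spectral_radius (map_mat complex_of_real C))"

text \<open>Reducible: permutationally similar (P A P^T, entry (i,j) = A (p i, p j)) to a block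
  lower triangular matrix with square diagonal blocks of sizes k and n-k (0<k<n),
  i.e. the upper right k x (n-k) block vanishes; or n = 1 and A = 0.\<close>
definition reducible_mat :: "real mat \<Rightarrow> bool" where
  "reducible_mat A \<longleftrightarrow>
     (\<exists>p k. p permutes {..<dim_row A} \<and> 0 < k \<and> k < dim_row A \<and>
        (\<forall>i < k. \<forall>j. k \<le> j \<and> j < dim_row A \<longrightarrow> A $$ (p i, p j) = 0))
     \<or> (dim_row A = 1 \<and> A = 0\<^sub>m 1 1)"

definition irreducible_mat :: "real mat \<Rightarrow> bool" where
  "irreducible_mat A \<longleftrightarrow> square_mat A \<and> \<not> reducible_mat A"

definition P_sharp_matrix :: "real mat \<Rightarrow> bool" where
  "P_sharp_matrix M \<longleftrightarrow> square_mat M \<and>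
     (\<forall>x \<in> carrier_vec (dim_row M).
        (\<exists>y \<in> carrier_vec (dim_col M). x = M *\<^sub>v y) \<and>
        (\<forall>i < dim_row M. x $ i * (M *\<^sub>v x) $ i \<le> 0) \<longrightarrow> x = 0\<^sub>v (dim_row M))"

end

theory Submission
  imports Defs "HOL-Analysis.Convex"
begin

text \<open>
  A symmetric M-matrix \<open>A = sI - C\<close> is positive semidefinite: by a power-method argument the
  Rayleigh quotient of the symmetric matrix \<open>C\<close> is at most \<open>\<rho>(C) \<le> s\<close>. With \<open>w = A\<^sup>-\<^sup>1u\<close>, the
  quadratic form of the bordered matrix \<open>B\<close> at \<open>(p, \<tau>)\<close> equals that of \<open>A\<close> at \<open>p + \<tau>w\<close>, so
  \<open>B\<close> is positive semidefinite too. Every symmetric positive semidefinite matrix is a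
  \<open>P\<^sub>#\<close>-matrix: the sign conditions give \<open>x\<^sup>TBx \<le> 0\<close>, hence \<open>x\<^sup>TBx = 0\<close> and \<open>Bx = 0\<close>, so \<open>x\<close> lies
  in both the kernel and the range of \<open>B\<close>, which are orthogonal.
\<close>

lemma scalar_prod_self_nonneg:
  fixes v :: "real vec"
  shows "0 \<le> v \<bullet> v"
  unfolding scalar_prod_def by (auto intro: sum_nonneg)

lemma scalar_prod_self_eq_0_iff:
  fixes v :: "real vec"
  assumes "v \<in> carrier_vec n"
  shows "v \<bullet> v = 0 \<longleftrightarrow> v = 0\<^sub>v n"
  using conjugate_square_eq_0_vec[OF assms] by (simp add: scalar_prod_def)

lemma scalar_prod_Cauchy_Schwarz:
  fixes a b :: "real vec"
  assumes "a \<in> carrier_vec n" "b \<in> carrier_vec n"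
  shows "(a \<bullet> b)\<^sup>2 \<le> (a \<bullet> a) * (b \<bullet> b)"
  using Cauchy_Schwarz_ineq_sum[of "\<lambda>i. a $ i" "\<lambda>i. b $ i" "{0..<n}"] assms
  by (simp add: scalar_prod_def power2_eq_square)

lemma smult_mat_mult_vec:
  fixes A :: "'a::comm_ring_1 mat"
  assumes "A \<in> carrier_mat nr nc" "v \<in> carrier_vec nc"
  shows "(k \<cdot>\<^sub>m A) *\<^sub>v v = k \<cdot>\<^sub>v (A *\<^sub>v v)"
  using assms by (intro eq_vecI) (auto simp: scalar_prod_def sum_distrib_left ac_simps)

lemma pow_mat_add:
  fixes D :: "'a::semiring_1 mat"
  assumes D: "D \<in> carrier_mat n n"
  shows "D ^\<^sub>m (a + b) = D ^\<^sub>m a * D ^\<^sub>m b"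
proof (induction b)
  case (Suc b)
  have "D ^\<^sub>m (a + Suc b) = (D ^\<^sub>m a * D ^\<^sub>m b) * D" using Suc by simp
  also have "\<dots> = D ^\<^sub>m a * (D ^\<^sub>m b * D)"
    using D by (intro assoc_mult_mat[of _ n n _ n _ n]) auto
  finally show ?case by simp
qed (use D in simp)

lemma transpose_pow_mat:
  fixes D :: "'a::comm_semiring_1 mat"
  assumes D: "D \<in> carrier_mat n n"
  shows "transpose_mat (D ^\<^sub>m k) = transpose_mat D ^\<^sub>m k"
proof (induction k)
  case (Suc k)
  have "transpose_mat (D ^\<^sub>m Suc k) = transpose_mat D * transpose_mat D ^\<^sub>m k"
    using transpose_mult[of "D ^\<^sub>m k" n n D n] D Suc by simp
  also have "\<dots> = transpose_mat D ^\<^sub>m (1 + k)"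
    using pow_mat_add[of "transpose_mat D" n 1 k] D by simp
  finally show ?case by simp
qed (use D in simp)

lemma quadratic_form_sym:
  fixes A :: "real mat"
  assumes A: "A \<in> carrier_mat n n" and sym: "transpose_mat A = A"
    and x: "x \<in> carrier_vec n" and y: "y \<in> carrier_vec n"
  shows "x \<bullet> (A *\<^sub>v y) = y \<bullet> (A *\<^sub>v x)"
proof -
  have "x \<bullet> (A *\<^sub>v y) = (transpose_mat A *\<^sub>v x) \<bullet> y"
    using transpose_vec_mult_scalar[OF A y x] by simp
  also have "\<dots> = y \<bullet> (A *\<^sub>v x)" using sym comm_scalar_prod[of "A *\<^sub>v x" n y] A x y by simp
  finally show ?thesis .
qed

lemma abs_quadratic_form_le:
  fixes M :: "real mat"
  assumes M: "M \<in> carrier_mat n n" and v: "v \<in> carrier_vec n"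
    and bound: "\<And>i j. i < n \<Longrightarrow> j < n \<Longrightarrow> \<bar>M $$ (i,j)\<bar> \<le> c"
  shows "\<bar>v \<bullet> (M *\<^sub>v v)\<bar> \<le> c * (\<Sum>i<n. \<bar>v $ i\<bar>)\<^sup>2"
proof -
  define S where "S = (\<Sum>i<n. \<bar>v $ i\<bar>)"
  have row_bound: "\<bar>(M *\<^sub>v v) $ i\<bar> \<le> c * S" if i: "i < n" for i
  proof -
    have "\<bar>(M *\<^sub>v v) $ i\<bar> = \<bar>\<Sum>j<n. M $$ (i,j) * v $ j\<bar>"
      using M v i by (simp add: scalar_prod_def lessThan_atLeast0)
    also have "\<dots> \<le> (\<Sum>j<n. \<bar>M $$ (i,j)\<bar> * \<bar>v $ j\<bar>)"
      by (metis (no_types, lifting) abs_mult sum.cong sum_abs)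
    also have "\<dots> \<le> (\<Sum>j<n. c * \<bar>v $ j\<bar>)"
      using bound i by (intro sum_mono mult_right_mono) auto
    finally show ?thesis unfolding S_def sum_distrib_left .
  qed
  have "\<bar>v \<bullet> (M *\<^sub>v v)\<bar> = \<bar>\<Sum>i<n. v $ i * (M *\<^sub>v v) $ i\<bar>"
    using M by (simp add: scalar_prod_def lessThan_atLeast0)
  also have "\<dots> \<le> (\<Sum>i<n. \<bar>v $ i\<bar> * \<bar>(M *\<^sub>v v) $ i\<bar>)"
    by (metis (no_types, lifting) abs_mult sum.cong sum_abs)
  also have "\<dots> \<le> (\<Sum>i<n. \<bar>v $ i\<bar> * (c * S))"
    using row_bound by (intro sum_mono mult_left_mono) auto
  also have "\<dots> = c * S\<^sup>2" unfolding S_def sum_distrib_right[symmetric] power2_eq_square by simp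
  finally show ?thesis unfolding S_def .
qed

lemma eigenvalue_smult_mat:
  fixes A :: "'a::comm_ring_1 mat"
  assumes A: "A \<in> carrier_mat n n" and ev: "eigenvalue A e"
  shows "eigenvalue (k \<cdot>\<^sub>m A) (k * e)"
proof -
  from ev obtain w where w: "w \<in> carrier_vec n" "w \<noteq> 0\<^sub>v n" "A *\<^sub>v w = e \<cdot>\<^sub>v w"
    using A unfolding eigenvalue_def eigenvector_def by auto
  have "(k \<cdot>\<^sub>m A) *\<^sub>v w = (k * e) \<cdot>\<^sub>v w"
    using w smult_mat_mult_vec[OF A w(1)] by (simp add: smult_smult_assoc)
  with w A show ?thesis unfolding eigenvalue_def eigenvector_def by auto
qed

lemma spectrum_smult_mat:
  fixes A :: "'a::field mat"
  assumes A: "A \<in> carrier_mat n n" and k: "k \<noteq> 0"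
  shows "spectrum (k \<cdot>\<^sub>m A) = (*) k ` spectrum A"
proof
  show "(*) k ` spectrum A \<subseteq> spectrum (k \<cdot>\<^sub>m A)"
    using eigenvalue_smult_mat[OF A] unfolding spectrum_def by auto
  show "spectrum (k \<cdot>\<^sub>m A) \<subseteq> (*) k ` spectrum A"
  proof
    fix e assume "e \<in> spectrum (k \<cdot>\<^sub>m A)"
    then have "eigenvalue ((1 / k) \<cdot>\<^sub>m (k \<cdot>\<^sub>m A)) (1 / k * e)"
      using A by (intro eigenvalue_smult_mat[of _ n]) (auto simp: spectrum_def)
    moreover have "(1 / k) \<cdot>\<^sub>m (k \<cdot>\<^sub>m A) = A"
      using k by (intro eq_matI) auto
    ultimately show "e \<in> (*) k ` spectrum A"
      using k by (intro image_eqI[of _ _ "1 / k * e"]) (auto simp: spectrum_def)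
  qed
qed

lemma spectral_radius_smult_mat:
  assumes A: "A \<in> carrier_mat n n" and n: "n > 0" and k: "k \<noteq> 0"
  shows "spectral_radius (k \<cdot>\<^sub>m A) = norm k * spectral_radius A"
proof -
  have "norm ` spectrum (k \<cdot>\<^sub>m A) = (*) (norm k) ` norm ` spectrum A"
    unfolding spectrum_smult_mat[OF A k] image_image by (simp add: norm_mult)
  moreover have "finite (norm ` spectrum A)" "norm ` spectrum A \<noteq> {}"
    using card_finite_spectrum(1)[OF A] spectral_radius_mem_max(1)[OF A n] by auto
  ultimately show ?thesis
    unfolding spectral_radius_def
    by (simp add: mono_Max_commute[symmetric] mono_def mult_left_mono)
qed

lemma doubling_growth:
  fixes q :: "nat \<Rightarrow> real"
  assumes N: "N > 0" and q1: "q 1 \<ge> 0" and square: "\<And>k. (q k)\<^sup>2 \<le> N * q (2 * k)"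
  shows "N * (q 1 / N) ^ 2 ^ k \<le> q (2 ^ k)"
proof (induction k)
  case (Suc k)
  have "0 \<le> N * (q 1 / N) ^ 2 ^ k" using N q1 by simp
  then have "(N * (q 1 / N) ^ 2 ^ k)\<^sup>2 \<le> (q (2 ^ k))\<^sup>2"
    using Suc by (intro power_mono) auto
  also have "\<dots> \<le> N * q (2 ^ Suc k)" using square[of "2 ^ k"] by simp
  finally have "N * (N * (q 1 / N) ^ 2 ^ Suc k) \<le> N * q (2 ^ Suc k)"
    by (simp add: power2_eq_square power_mult power_add mult_2 ac_simps)
  then show ?case using N by simp
qed (use N in simp)

text \<open>
  Power method: the quadratic forms \<open>q k = v\<^sup>TD\<^sup>kv\<close> satisfy \<open>q(k)\<^sup>2 \<le> |v|\<^sup>2 q(2k)\<close> by Cauchy-Schwarz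
  (this uses symmetry), so \<open>q 1 > |v|\<^sup>2\<close> would make \<open>q(2\<^sup>k)\<close> grow doubly exponentially.
\<close>
lemma quadratic_form_le_if_pow_bounded:
  fixes D :: "real mat"
  assumes D: "D \<in> carrier_mat n n" and sym: "transpose_mat D = D" and v: "v \<in> carrier_vec n"
    and bound: "\<And>k i j. i < n \<Longrightarrow> j < n \<Longrightarrow> \<bar>(D ^\<^sub>m k) $$ (i,j)\<bar> \<le> c"
  shows "v \<bullet> (D *\<^sub>v v) \<le> v \<bullet> v"
proof (rule ccontr)
  define q where "q k = v \<bullet> (D ^\<^sub>m k *\<^sub>v v)" for k
  define N where "N = v \<bullet> v"
  assume "\<not> ?thesis"
  then have q1: "q 1 > N" using D v by (simp add: q_def N_def)
  have "N \<noteq> 0"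
    using q1 scalar_prod_self_eq_0_iff[OF v] D by (auto simp: q_def N_def)
  then have N: "N > 0" using scalar_prod_self_nonneg[of v] by (simp add: N_def)
  have square: "(q k)\<^sup>2 \<le> N * q (2 * k)" for k
  proof -
    let ?P = "D ^\<^sub>m k"
    have P: "?P \<in> carrier_mat n n" using D by simp
    then have Pv: "?P *\<^sub>v v \<in> carrier_vec n" using v by simp
    have "q (2 * k) = v \<bullet> (?P *\<^sub>v (?P *\<^sub>v v))"
      unfolding q_def mult_2 pow_mat_add[OF D] using P v by simp
    also have "\<dots> = (transpose_mat ?P *\<^sub>v v) \<bullet> (?P *\<^sub>v v)"
      using transpose_vec_mult_scalar[OF P Pv v] by simp
    also have "\<dots> = (?P *\<^sub>v v) \<bullet> (?P *\<^sub>v v)"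
      using transpose_pow_mat[OF D] sym by simp
    finally show ?thesis using scalar_prod_Cauchy_Schwarz[OF v Pv] by (simp add: q_def N_def)
  qed
  define b where "b = c * (\<Sum>i<n. \<bar>v $ i\<bar>)\<^sup>2"
  have q_bound: "q k \<le> b" for k
    using abs_le_D1[OF abs_quadratic_form_le[OF pow_carrier_mat[OF D] v bound]]
    by (simp add: q_def b_def)
  have r: "q 1 / N > 1" using q1 N by simp
  then obtain k where "b / N < (q 1 / N) ^ k" using real_arch_pow by blast
  also have "\<dots> \<le> (q 1 / N) ^ 2 ^ k"
    using r by (intro power_increasing) (auto intro: less_imp_le less_exp)
  finally have "b < N * (q 1 / N) ^ 2 ^ k" using N by (simp add: field_simps)
  also have "\<dots> \<le> q (2 ^ k)" using doubling_growth[of N q, OF N _ square] q1 N by simp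
  finally show False using q_bound[of "2 ^ k"] by simp
qed

lemma quadratic_form_le_spectral_radius:
  fixes C :: "real mat"
  assumes C: "C \<in> carrier_mat n n" and sym: "transpose_mat C = C" and v: "v \<in> carrier_vec n"
  shows "v \<bullet> (C *\<^sub>v v) \<le> spectral_radius (map_mat complex_of_real C) * (v \<bullet> v)"
proof (cases "v = 0\<^sub>v n")
  case True
  then show ?thesis using C by simp
next
  case False
  let ?Cc = "map_mat complex_of_real C" and ?N = "v \<bullet> v"
  have Cc: "?Cc \<in> carrier_mat n n" using C by simp
  have n: "n > 0" using False v by (intro Nat.gr0I) auto
  have N: "?N > 0"
    using False scalar_prod_self_eq_0_iff[OF v] scalar_prod_self_nonneg[of v] by linarith
  have "v \<bullet> (C *\<^sub>v v) / ?N \<le> t" if t: "t > spectral_radius ?Cc" for t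
  proof -
    have "spectral_radius ?Cc \<ge> 0" using spectral_radius_mem_max(1)[OF Cc n] by auto
    with t have t0: "t > 0" by simp
    define D where "D = (1 / t) \<cdot>\<^sub>m C"
    have D: "D \<in> carrier_mat n n" using C by (simp add: D_def)
    have "transpose_mat D = (1 / t) \<cdot>\<^sub>m transpose_mat C" by (intro eq_matI) (auto simp: D_def)
    then have symD: "transpose_mat D = D" using sym by (simp add: D_def)
    have Dc: "map_mat complex_of_real D = complex_of_real (1 / t) \<cdot>\<^sub>m ?Cc"
      by (auto simp: D_def)
    have "spectral_radius (map_mat complex_of_real D) = spectral_radius ?Cc / t"
      using spectral_radius_smult_mat[OF Cc n, of "complex_of_real (1 / t)"] t0 Dc
      by (simp add: norm_divide)
    then have "spectral_radius (map_mat complex_of_real D) < 1" using t t0 by simp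
    from spectral_radius_jnf_norm_bound_less_1_upper_triangular[OF _ this]
    obtain c where c: "\<And>k. norm_bound (map_mat complex_of_real D ^\<^sub>m k) c" using D by auto
    have "\<bar>(D ^\<^sub>m k) $$ (i,j)\<bar> \<le> c" if "i < n" "j < n" for k i j
      using c[of k] that D by (auto simp: norm_bound_def of_real_hom.mat_hom_pow[symmetric])
    from quadratic_form_le_if_pow_bounded[OF D symD v this]
    have "v \<bullet> (C *\<^sub>v v) / t \<le> ?N"
      using C v by (simp add: D_def smult_mat_mult_vec[OF C v])
    then show ?thesis using N t0 by (simp add: pos_divide_le_eq mult.commute)
  qed
  then have "v \<bullet> (C *\<^sub>v v) / ?N \<le> spectral_radius ?Cc" by (rule dense_ge)
  then show ?thesis using N by (simp add: divide_le_eq)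
qed

definition psd_mat :: "real mat \<Rightarrow> bool" where
  "psd_mat A \<longleftrightarrow> square_mat A \<and> transpose_mat A = A \<and>
     (\<forall>v \<in> carrier_vec (dim_row A). 0 \<le> v \<bullet> (A *\<^sub>v v))"

lemma M_matrix_sym_psd:
  assumes sym: "transpose_mat A = A" and M: "M_matrix A"
  shows "psd_mat A"
proof -
  define n where "n = dim_row A"
  from M[unfolded M_matrix_def] have "square_mat A" by (rule conjunct1)
  then have A: "A \<in> carrier_mat n n" by (intro carrier_matI) (simp_all add: n_def)
  from M[unfolded M_matrix_def n_def[symmetric]] obtain s C where C: "C \<in> carrier_mat n n"
    and AC: "A = s \<cdot>\<^sub>m 1\<^sub>m n - C" and s: "s \<ge> spectral_radius (map_mat complex_of_real C)"
    by (elim conjE exE) (rule that)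
  have C_entry: "C $$ (i,j) = (if i = j then s else 0) - A $$ (i,j)" if "i < n" "j < n" for i j
    using arg_cong[OF AC, of "\<lambda>M. M $$ (i,j)"] that C by simp
  have A_sym: "A $$ (j,i) = A $$ (i,j)" if "i < n" "j < n" for i j
    using arg_cong[OF sym, of "\<lambda>M. M $$ (i,j)"] that A by simp
  have "C $$ (j,i) = C $$ (i,j)" if "i < n" "j < n" for i j
    using C_entry[OF that] C_entry[of j i] A_sym[OF that] that by (simp add: eq_commute[of j i])
  then have symC: "transpose_mat C = C" using C by (intro eq_matI) auto
  have "0 \<le> v \<bullet> (A *\<^sub>v v)" if v: "v \<in> carrier_vec n" for v
  proof -
    have Cv: "C *\<^sub>v v \<in> carrier_vec n" using C v by simp
    have "v \<bullet> (A *\<^sub>v v) = s * (v \<bullet> v) - v \<bullet> (C *\<^sub>v v)"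
      unfolding AC using C v Cv
      by (simp add: minus_mult_distrib_mat_vec[of _ n n] smult_mat_mult_vec[of _ n n]
          scalar_prod_minus_distrib[of _ n])
    moreover have "spectral_radius (map_mat complex_of_real C) * (v \<bullet> v) \<le> s * (v \<bullet> v)"
      using s scalar_prod_self_nonneg[of v] by (rule mult_right_mono)
    ultimately show ?thesis using quadratic_form_le_spectral_radius[OF C symC v] by linarith
  qed
  moreover have "square_mat A" "dim_row A = n" using A by auto
  ultimately show ?thesis using sym by (simp add: psd_mat_def)
qed

text \<open>
  If \<open>v\<^sup>TAv = 0\<close>, the quadratic form at \<open>v - \<epsilon>Av\<close> is \<open>\<epsilon>\<^sup>2(Av)\<^sup>TA(Av) - 2\<epsilon>|Av|\<^sup>2\<close>, which is
  negative for small \<open>\<epsilon> > 0\<close> unless \<open>Av = 0\<close>.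
\<close>
lemma psd_mat_quadratic_form_eq_0:
  assumes psd: "psd_mat A" and A: "A \<in> carrier_mat n n"
    and v: "v \<in> carrier_vec n" and v0: "v \<bullet> (A *\<^sub>v v) = 0"
  shows "A *\<^sub>v v = 0\<^sub>v n"
proof -
  define y where "y = A *\<^sub>v v"
  have y: "y \<in> carrier_vec n" and Ay: "A *\<^sub>v y \<in> carrier_vec n" using A v by (auto simp: y_def)
  have sym: "transpose_mat A = A" and nonneg: "\<And>x. x \<in> carrier_vec n \<Longrightarrow> 0 \<le> x \<bullet> (A *\<^sub>v x)"
    using psd A by (auto simp: psd_mat_def)
  define Y where "Y = y \<bullet> y"
  define Q where "Q = y \<bullet> (A *\<^sub>v y)"
  have form: "(v - e \<cdot>\<^sub>v y) \<bullet> (A *\<^sub>v (v - e \<cdot>\<^sub>v y)) = e * e * Q - 2 * e * Y" for e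
  proof -
    have ey: "e \<cdot>\<^sub>v y \<in> carrier_vec n" using y by simp
    have "A *\<^sub>v (v - e \<cdot>\<^sub>v y) = y - e \<cdot>\<^sub>v (A *\<^sub>v y)"
      using mult_minus_distrib_mat_vec[OF A v ey] mult_mat_vec[OF A y] y_def by simp
    moreover have "v \<bullet> (A *\<^sub>v y) = y \<bullet> y" using quadratic_form_sym[OF A sym v y] y_def by simp
    moreover have "v \<bullet> y = 0" using v0 y_def by simp
    ultimately show ?thesis using v y Ay ey
      by (simp add: minus_scalar_prod_distrib[of _ n] scalar_prod_minus_distrib[of _ n]
          algebra_simps Q_def Y_def)
  qed
  have "Y = 0"
  proof (rule ccontr)
    assume "Y \<noteq> 0"
    then have Y: "Y > 0" using scalar_prod_self_nonneg[of y] by (simp add: Y_def)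
    have Q: "Q \<ge> 0" using nonneg[OF y] by (simp add: Q_def)
    define e where "e = Y / (Q + 1)"
    have e: "e > 0" and "e * Q < Y" using Y Q by (simp_all add: e_def field_simps)
    then have "e * (e * Q) < e * (2 * Y)" using Y by simp
    then have "e * e * Q - 2 * e * Y < 0" by (simp add: algebra_simps)
    with form[of e] nonneg[of "v - e \<cdot>\<^sub>v y"] v y show False by simp
  qed
  then show ?thesis using scalar_prod_self_eq_0_iff[OF y] by (simp add: Y_def y_def)
qed

lemma psd_mat_P_sharp:
  assumes psd: "psd_mat B"
  shows "P_sharp_matrix B"
  unfolding P_sharp_matrix_def
proof (intro conjI ballI impI)
  define m where "m = dim_row B"
  have B: "B \<in> carrier_mat m m" and sym: "transpose_mat B = B"
    using psd by (auto simp: psd_mat_def m_def)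
  then show "square_mat B" by simp
  fix x assume x: "x \<in> carrier_vec (dim_row B)"
    and hyp: "(\<exists>y \<in> carrier_vec (dim_col B). x = B *\<^sub>v y) \<and> (\<forall>i < dim_row B. x $ i * (B *\<^sub>v x) $ i \<le> 0)"
  from hyp B obtain y where y: "y \<in> carrier_vec m" and xy: "x = B *\<^sub>v y" by auto
  have x: "x \<in> carrier_vec m" using x by (simp add: m_def)
  have "x \<bullet> (B *\<^sub>v x) = (\<Sum>i<m. x $ i * (B *\<^sub>v x) $ i)"
    using B by (simp add: scalar_prod_def lessThan_atLeast0)
  also have "\<dots> \<le> 0" using hyp by (intro sum_nonpos) (simp add: m_def)
  finally have "x \<bullet> (B *\<^sub>v x) = 0" using psd x by (force simp: psd_mat_def m_def)
  from psd_mat_quadratic_form_eq_0[OF psd B x this] have Bx: "B *\<^sub>v x = 0\<^sub>v m" .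
  have "x \<bullet> x = (transpose_mat B *\<^sub>v x) \<bullet> y"
    using xy transpose_vec_mult_scalar[OF B y x] by simp
  also have "\<dots> = 0" using sym Bx y by simp
  finally show "x = 0\<^sub>v (dim_row B)" using scalar_prod_self_eq_0_iff[OF x] by (simp add: m_def)
qed

lemma scalar_prod_Suc_split:
  assumes "x \<in> carrier_vec (Suc n)" "y \<in> carrier_vec (Suc n)"
  shows "x \<bullet> y = vec n (($) x) \<bullet> vec n (($) y) + x $ n * y $ n"
  using assms by (simp add: scalar_prod_def)

text \<open>
  The bordered matrix \<open>[A u; u\<^sup>T u\<^sup>Tw]\<close> with \<open>Aw = u\<close>, i.e.\ \<open>u = Aw\<close> and \<open>u\<^sup>Tw = w\<^sup>TAw\<close>,
  is \<open>[I; w\<^sup>T] A [I w]\<close>, a congruence image of \<open>A\<close>.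
\<close>
lemma bordered_quadratic_form:
  fixes A :: "real mat"
  assumes A: "A \<in> carrier_mat n n" and sym: "transpose_mat A = A"
    and w: "w \<in> carrier_vec n" and Aw: "A *\<^sub>v w = u"
    and x: "x \<in> carrier_vec (Suc n)"
  defines "B \<equiv> four_block_mat A (mat_of_cols n [u]) (mat_of_rows n [u]) (mat 1 1 (\<lambda>_. u \<bullet> w))"
  shows "x \<bullet> (B *\<^sub>v x) = (vec n (($) x) + x $ n \<cdot>\<^sub>v w) \<bullet> (A *\<^sub>v (vec n (($) x) + x $ n \<cdot>\<^sub>v w))"
proof -
  define p where "p = vec n (($) x)"
  define \<tau> where "\<tau> = x $ n"
  have p: "p \<in> carrier_vec n" by (simp add: p_def)
  have u: "u \<in> carrier_vec n" using A w Aw[symmetric] by simp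
  have Ap: "A *\<^sub>v p \<in> carrier_vec n" using A p by simp
  have B: "B \<in> carrier_mat (Suc n) (Suc n)"
    using four_block_carrier_mat[OF A, of "mat 1 1 (\<lambda>_. u \<bullet> w)" 1 1] by (simp add: B_def)
  have B_entry: "B $$ (i,j) = (if i < n then if j < n then A $$ (i,j) else u $ i
      else if j < n then u $ j else u \<bullet> w)" if "i < Suc n" "j < Suc n" for i j
    using that A u by (auto simp: B_def mat_of_cols_index mat_of_rows_index)
  have B_upper: "vec n (($) (B *\<^sub>v x)) = A *\<^sub>v p + \<tau> \<cdot>\<^sub>v u"
  proof (rule eq_vecI)
    fix i assume "i < dim_vec (A *\<^sub>v p + \<tau> \<cdot>\<^sub>v u)"
    then have i: "i < n" using A u by simp
    have "(B *\<^sub>v x) $ i = (\<Sum>j<n. B $$ (i,j) * x $ j) + B $$ (i,n) * x $ n"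
      using B x i by (simp add: scalar_prod_def lessThan_atLeast0)
    also have "\<dots> = (A *\<^sub>v p) $ i + \<tau> * u $ i"
      using A i by (simp add: B_entry scalar_prod_def p_def \<tau>_def lessThan_atLeast0)
    finally show "vec n (($) (B *\<^sub>v x)) $ i = (A *\<^sub>v p + \<tau> \<cdot>\<^sub>v u) $ i"
      using A u i by simp
  qed (use A u in simp)
  have B_last: "(B *\<^sub>v x) $ n = u \<bullet> p + (u \<bullet> w) * \<tau>"
  proof -
    have "(B *\<^sub>v x) $ n = (\<Sum>j<n. B $$ (n,j) * x $ j) + B $$ (n,n) * x $ n"
      using B x by (simp add: scalar_prod_def lessThan_atLeast0)
    then show ?thesis using u by (simp add: B_entry scalar_prod_def p_def \<tau>_def lessThan_atLeast0)
  qed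
  have "x \<bullet> (B *\<^sub>v x) = p \<bullet> (A *\<^sub>v p + \<tau> \<cdot>\<^sub>v u) + \<tau> * (u \<bullet> p + (u \<bullet> w) * \<tau>)"
    using scalar_prod_Suc_split[OF x mult_mat_vec_carrier[OF B x]] B_upper B_last
    by (simp add: p_def \<tau>_def)
  also have "\<dots> = (p + \<tau> \<cdot>\<^sub>v w) \<bullet> (A *\<^sub>v (p + \<tau> \<cdot>\<^sub>v w))"
  proof -
    have "w \<bullet> (A *\<^sub>v p) = u \<bullet> p" "p \<bullet> u = u \<bullet> p" "w \<bullet> u = u \<bullet> w"
      using quadratic_form_sym[OF A sym w p] Aw comm_scalar_prod[OF p u] comm_scalar_prod[OF w u]
      by auto
    moreover have "A *\<^sub>v (p + \<tau> \<cdot>\<^sub>v w) = A *\<^sub>v p + \<tau> \<cdot>\<^sub>v u"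
      using A p w Aw by (simp add: mult_add_distrib_mat_vec[of _ n n] mult_mat_vec[of _ n n])
    ultimately show ?thesis using p w u Ap
      by (simp add: scalar_prod_add_distrib[of _ n] add_scalar_prod_distrib[of _ n] algebra_simps)
  qed
  finally show ?thesis by (simp add: p_def \<tau>_def)
qed

lemma psd_mat_bordered:
  fixes A :: "real mat"
  assumes psd: "psd_mat A" and A: "A \<in> carrier_mat n n"
    and w: "w \<in> carrier_vec n" and Aw: "A *\<^sub>v w = u"
  shows "psd_mat (four_block_mat A (mat_of_cols n [u]) (mat_of_rows n [u]) (mat 1 1 (\<lambda>_. u \<bullet> w)))"
    (is "psd_mat ?B")
proof -
  have sym: "transpose_mat A = A" using psd by (simp add: psd_mat_def)
  have u: "u \<in> carrier_vec n" using A w Aw[symmetric] by simp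
  have "A $$ (j, i) = A $$ (i, j)" if "i < n" "j < n" for i j
    using arg_cong[OF sym, of "\<lambda>M. M $$ (i, j)"] that A by auto
  then have "transpose_mat ?B = ?B"
    using A u by (intro eq_matI) (auto simp: mat_of_cols_index mat_of_rows_index)
  moreover have "0 \<le> x \<bullet> (?B *\<^sub>v x)" if "x \<in> carrier_vec (Suc n)" for x
    unfolding bordered_quadratic_form[OF A sym w Aw that]
    using psd A w by (auto simp: psd_mat_def)
  ultimately show ?thesis using A by (simp add: psd_mat_def)
qed

lemma invertible_mat_inverse:
  fixes A :: "'a::field mat"
  assumes A: "A \<in> carrier_mat n n" and inv: "invertible_mat A"
  shows "A * the (mat_inverse A) = 1\<^sub>m n" "the (mat_inverse A) \<in> carrier_mat n n"
proof -
  from inv obtain A' where AA': "A * A' = 1\<^sub>m n" and A'A: "A' * A = 1\<^sub>m (dim_row A')"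
    using A unfolding invertible_mat_def inverts_mat_def by auto
  have A': "A' \<in> carrier_mat n n"
    using A arg_cong[OF AA', of dim_col] arg_cong[OF A'A, of dim_col] by auto
  with A'A have A'A: "A' * A = 1\<^sub>m n" by simp
  then have "A \<in> Units (ring_mat TYPE('a) n ())"
    using A A' AA' A'A unfolding Units_def ring_mat_def by auto
  then obtain A'' where "mat_inverse A = Some A''"
    using mat_inverse(1)[OF A, where b = "()"] by (cases "mat_inverse A") auto
  then show "A * the (mat_inverse A) = 1\<^sub>m n" "the (mat_inverse A) \<in> carrier_mat n n"
    using mat_inverse(2)[OF A] by auto
qed

theorem mainTheorem4:
  fixes A :: "real mat" and u :: "real vec" and n :: nat
  assumes "A \<in> carrier_mat n n"
    and "transpose_mat A = A"
    and "irreducible_mat A"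
    and "M_matrix A"
    and "invertible_mat A"
    and "u \<in> carrier_vec n"
    and "u \<noteq> 0\<^sub>v n"
    and "\<forall>i < n. u $ i \<le> 0"
  shows "P_sharp_matrix
           (four_block_mat A (mat_of_cols n [u]) (mat_of_rows n [u])
              (mat 1 1 (\<lambda>_. u \<bullet> (the (mat_inverse A) *\<^sub>v u))))"
proof -
  note A = assms(1) and u = assms(6)
  define w where "w = the (mat_inverse A) *\<^sub>v u"
  have w: "w \<in> carrier_vec n" and Aw: "A *\<^sub>v w = u"
    using invertible_mat_inverse[OF A assms(5)] A u
    by (auto simp: w_def simp flip: assoc_mult_mat_vec)
  have "psd_mat A" using M_matrix_sym_psd[OF assms(2,4)] .
  from psd_mat_bordered[OF this A w Aw] show ?thesis
    unfolding w_def by (rule psd_mat_P_sharp)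
qed

end
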